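(* Fix $y_0\in Y$ and suppose an optimal solution $(\bar\psi,\bar\eta)$ of the dual problem exists. Let $(y(\cdot),u(\cdot))$ be an admissible process on $\{0,1,\dots\}$ with $y(0)=y_0$ which is periodic, i.e. there is an integer $T_0>0$ with $(y(t+T_0),u(t+T_0))=(y(t),u(t))$ for all $t\ge0$. Suppose $u(\cdot)$ is optimal in the long-run average problem, i.e. $$\liminf_{T\to\infty}\frac1T\sum_{t=0}^{T-1}k(y(t),u(t))=\inf_{u'\in\mathcal U(y_0)}\liminf_{T\to\infty}\frac1T\sum_{t=0}^{T-1}k(y'(t),u'(t)),$$ where $y'$ is the trajectory generated by $u'$. Then for all $t=0,1,\dots$: $$k(y(t),u(t))-\bar\psi(y(t))+\bar\eta(f(y(t),u(t)))-\bar\eta(y(t))=V(y_0)-\bar\psi(y_0)\quad\text{and}\quad\bar\psi(y(t))=\bar\psi(y_0).$$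
   Context: Let $Y\subset\mathbb{R}^m$ be nonempty compact, $U_0$ a compact metric space, $U(\cdot):Y\rightsquigarrow U_0$ upper semicontinuous and compact-valued, and $f:\mathbb{R}^m\times U_0\to\mathbb{R}^m$, $k:\mathbb{R}^m\times U_0\to\mathbb{R}$ continuous. Put $A(y):=\{u\in U(y): f(y,u)\in Y\}$ and $G:=\{(y,u):y\in Y,\ u\in A(y)\}$. Standing assumption: $A(y)\ne\emptyset$ for all $y\in Y$. An admissible process from $y_0$ on $\{0,\dots,T-1\}$ (respectively on $\{0,1,\dots\}$) is a pair $(y(t),u(t))$ with $y(0)=y_0$, $u(t)\in A(y(t))$ and $y(t+1)=f(y(t),u(t))$. The controls form $\mathcal U_T(y_0)$ (respectively $\mathcal U(y_0)$). Define $V_T(y_0):=\frac1T\min_{u\in\mathcal U_T(y_0)}\sum_{t=0}^{T-1}k(y(t),u(t))$. Standing assumption of this result: for every $y\in Y$ the limit $V(y):=\lim_{T\to\infty}V_T(y)$ exists, and $V$ is continuous on $Y$. Dual problem: $d^*(y_0):=\sup\mu$, where the supremum is over triples $(\mu,\psi,\eta)\in\mathbb{R}\times C(Y)\times C(Y)$ with, for all $(y,u)\in G$: $$k(y,u)+\psi(y_0)-\psi(y)+\eta(f(y,u))-\eta(y)-\mu\ge0,\qquad\psi(f(y,u))-\psi(y)\ge0.$$ An optimal solution of the dual problem is a pair $(\bar\psi,\bar\eta)\in C(Y)\times C(Y)$ with, for all $(y,u)\in G$: $$k(y,u)+\bar\psi(y_0)-\bar\psi(y)+\bar\eta(f(y,u))-\bar\eta(y)\ge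 d^*(y_0),\qquad\bar\psi(f(y,u))-\bar\psi(y)\ge0.$$ *)

theory Defs
  imports "HOL-Analysis.Analysis"
begin

definition usc_on :: "'a::metric_space set \<Rightarrow> ('a \<Rightarrow> 'b::topological_space set) \<Rightarrow> bool" where
  "usc_on Y U \<longleftrightarrow> (\<forall>y\<in>Y. \<forall>W. open W \<and> U y \<subseteq> W \<longrightarrow>
      (\<exists>e>0. \<forall>y'\<in>Y. dist y' y < e \<longrightarrow> U y' \<subseteq> W))"

definition Aset :: "'a set \<Rightarrow> ('a \<Rightarrow> 'b set) \<Rightarrow> ('a \<Rightarrow> 'b \<Rightarrow> 'a) \<Rightarrow> 'a \<Rightarrow> 'b set" where
  "Aset Y U f y = {u \<in> U y. f y u \<in> Y}"

definition Gset :: "'a set \<Rightarrow> ('a \<Rightarrow> 'b set) \<Rightarrow> ('a \<Rightarrow> 'b \<Rightarrow> 'a) \<Rightarrow> ('a \<times> 'b) set" where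
  "Gset Y U f = {(y, u). y \<in> Y \<and> u \<in> Aset Y U f y}"

fun traj :: "('a \<Rightarrow> 'b \<Rightarrow> 'a) \<Rightarrow> 'a \<Rightarrow> (nat \<Rightarrow> 'b) \<Rightarrow> nat \<Rightarrow> 'a" where
  "traj f y0 u 0 = y0"
| "traj f y0 u (Suc t) = f (traj f y0 u t) (u t)"

definition UT :: "'a set \<Rightarrow> ('a \<Rightarrow> 'b set) \<Rightarrow> ('a \<Rightarrow> 'b \<Rightarrow> 'a) \<Rightarrow> 'a \<Rightarrow> nat \<Rightarrow> (nat \<Rightarrow> 'b) set" where
  "UT Y U f y0 T = {u. \<forall>t<T. u t \<in> Aset Y U f (traj f y0 u t)}"

definition Uinf :: "'a set \<Rightarrow> ('a \<Rightarrow> 'b set) \<Rightarrow> ('a \<Rightarrow> 'b \<Rightarrow> 'a) \<Rightarrow> 'a \<Rightarrow> (nat \<Rightarrow> 'b) set" where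
  "Uinf Y U f y0 = {u. \<forall>t. u t \<in> Aset Y U f (traj f y0 u t)}"

definition VT :: "'a set \<Rightarrow> ('a \<Rightarrow> 'b set) \<Rightarrow> ('a \<Rightarrow> 'b \<Rightarrow> 'a) \<Rightarrow> ('a \<Rightarrow> 'b \<Rightarrow> real) \<Rightarrow> 'a \<Rightarrow> nat \<Rightarrow> real" where
  "VT Y U f k y0 T = (1 / real T) *
     Inf ((\<lambda>u. \<Sum>t<T. k (traj f y0 u t) (u t)) ` UT Y U f y0 T)"

definition dstar :: "'a::topological_space set \<Rightarrow> ('a \<Rightarrow> 'b set) \<Rightarrow> ('a \<Rightarrow> 'b \<Rightarrow> 'a) \<Rightarrow> ('a \<Rightarrow> 'b \<Rightarrow> real) \<Rightarrow> 'a \<Rightarrow> ereal" where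
  "dstar Y U f k y0 = (SUP \<mu> \<in> {\<mu>. \<exists>\<psi> \<eta>. continuous_on Y \<psi> \<and> continuous_on Y \<eta> \<and>
      (\<forall>(y, u) \<in> Gset Y U f.
          k y u + \<psi> y0 - \<psi> y + \<eta> (f y u) - \<eta> y - \<mu> \<ge> 0 \<and> \<psi> (f y u) - \<psi> y \<ge> 0)}. ereal \<mu>)"

definition dual_optimal :: "'a::topological_space set \<Rightarrow> ('a \<Rightarrow> 'b set) \<Rightarrow> ('a \<Rightarrow> 'b \<Rightarrow> 'a) \<Rightarrow> ('a \<Rightarrow> 'b \<Rightarrow> real) \<Rightarrow> 'a
     \<Rightarrow> ('a \<Rightarrow> real) \<Rightarrow> ('a \<Rightarrow> real) \<Rightarrow> bool" where
  "dual_optimal Y U f k y0 \<psi> \<eta> \<longleftrightarrow> continuous_on Y \<psi> \<and> continuous_on Y \<eta> \<and>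
     (\<forall>(y, u) \<in> Gset Y U f.
        ereal (k y u + \<psi> y0 - \<psi> y + \<eta> (f y u) - \<eta> y) \<ge> dstar Y U f k y0 \<and> \<psi> (f y u) - \<psi> y \<ge> 0)"

definition avg_cost :: "('a \<Rightarrow> 'b \<Rightarrow> 'a) \<Rightarrow> ('a \<Rightarrow> 'b \<Rightarrow> real) \<Rightarrow> 'a \<Rightarrow> (nat \<Rightarrow> 'b) \<Rightarrow> ereal" where
  "avg_cost f k y0 u = liminf (\<lambda>T. ereal ((1 / real T) * (\<Sum>t<T. k (traj f y0 u t) (u t))))"

end

theory Submission
  imports Defs
begin

text \<open>Along the periodic process the second dual constraint makes \<open>\<psi>\<close> nondecreasing, and
  periodicity makes it constant. The first constraint then bounds
  \<open>c t = k (y t) (u t) + \<eta> (y (t + 1)) - \<eta> (y t)\<close> from below by \<open>d*(y0) \<ge> V y0\<close>; the latter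
  inequality holds because \<open>(V y0 - e, V, \<eta>\<^sub>e)\<close> is dual feasible, where \<open>\<eta>\<^sub>e\<close> is a Cesaro mean of
  Lipschitz-regularised finite-horizon value functions. As \<open>\<eta>\<close> telescopes over a period, the
  period mean of \<open>c\<close> is the long-run average cost of \<open>u\<close>, which by optimality is at most \<open>V y0\<close>:
  concatenating near-optimal finite-horizon blocks yields controls of average cost at most
  \<open>V y0 + e\<close>. Hence \<open>c t = V y0\<close> for all \<open>t\<close>.

  Both estimates rest on a uniform bound, obtained from compactness, continuity of \<open>V\<close> and the
  monotonicity of \<open>V\<close> along trajectories: for large \<open>N\<close>, every admissible \<open>N\<close>-step cost from any
  \<open>z\<close> is at least \<open>N (V z - e)\<close>, and this survives small perturbations of the trajectory.\<close>

lemma sum_lessThan_add: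
  fixes g :: "nat \<Rightarrow> 'c::comm_monoid_add"
  shows "(\<Sum>t<m + n. g t) = (\<Sum>t<m. g t) + (\<Sum>s<n. g (m + s))"
  by (induction n) (auto simp: add.assoc)

lemma periodic_mod:
  fixes g :: "nat \<Rightarrow> 'c" and T0 :: nat
  assumes "\<And>t. g (t + T0) = g t"
  shows "g t = g (t mod T0)"
proof -
  have "g (s + q * T0) = g s" for s q
  proof (induction q)
    case (Suc q)
    have "g (s + Suc q * T0) = g ((s + q * T0) + T0)" by (simp add: algebra_simps)
    with Suc show ?case by (simp only: assms)
  qed simp
  then show ?thesis by (metis mod_div_mult_eq)
qed

lemma periodic_mono_const:
  fixes g :: "nat \<Rightarrow> 'c::order"
  assumes mono: "\<And>t. g t \<le> g (Suc t)" and periodic: "\<And>t. g (t + T0) = g t" and "T0 > 0"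
  shows "g t = g 0"
proof (rule antisym)
  have "g t \<le> g (t * T0)" using \<open>T0 > 0\<close> by (intro lift_Suc_mono_le[of g, OF mono]) simp
  also have "\<dots> = g 0" using periodic_mod[of g T0, OF periodic, of "t * T0"] by simp
  finally show "g t \<le> g 0" .
  show "g 0 \<le> g t" by (intro lift_Suc_mono_le[of g, OF mono]) simp
qed

lemma periodic_sum_bounded:
  fixes b :: "nat \<Rightarrow> real"
  assumes periodic: "\<And>t. b (t + T0) = b t" and zero: "(\<Sum>t<T0. b t) = 0" and "T0 > 0"
  obtains M where "\<And>T. \<bar>\<Sum>t<T. b t\<bar> \<le> M"
proof
  have "(\<Sum>t<T + T0. b t) = (\<Sum>t<T. b t)" for T
    using sum_lessThan_add[of b T0 T] periodic zero by (simp add: add.commute)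
  then have "(\<Sum>t<T. b t) = (\<Sum>t<T mod T0. b t)" for T
    by (rule periodic_mod[where g = "\<lambda>T. \<Sum>t<T. b t"])
  moreover have "T mod T0 \<in> {..<T0}" for T
    using \<open>T0 > 0\<close> by simp
  ultimately show "\<bar>\<Sum>t<T. b t\<bar> \<le> Max ((\<lambda>T. \<bar>\<Sum>t<T. b t\<bar>) ` {..<T0})" for T
    by (metis Max_ge finite_imageI finite_lessThan image_eqI)
qed

lemma periodic_average_tendsto:
  fixes a :: "nat \<Rightarrow> real"
  assumes periodic: "\<And>t. a (t + T0) = a t" and "T0 > 0"
  shows "(\<lambda>T. (1 / real T) * (\<Sum>t<T. a t)) \<longlonglongrightarrow> (\<Sum>t<T0. a t) / real T0"
proof -
  define P where "P = (\<Sum>t<T0. a t) / real T0"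
  have zero: "(\<Sum>t<T0. a t - P) = 0"
    using \<open>T0 > 0\<close> by (simp add: sum_subtractf P_def)
  obtain M where M: "\<And>T. \<bar>\<Sum>t<T. a t - P\<bar> \<le> M"
    using periodic_sum_bounded[of "\<lambda>t. a t - P" T0] periodic zero \<open>T0 > 0\<close> by auto
  have "(\<lambda>T. (\<Sum>t<T. a t - P) / real T) \<longlonglongrightarrow> 0"
  proof (rule Lim_null_comparison)
    show "\<forall>\<^sub>F T in sequentially. norm ((\<Sum>t<T. a t - P) / real T) \<le> M / real T"
      using M by (intro always_eventually allI) (simp add: divide_right_mono)
    show "(\<lambda>T. M / real T) \<longlonglongrightarrow> 0"
      by (rule lim_const_over_n)
  qed
  then have "(\<lambda>T. (\<Sum>t<T. a t - P) / real T + P) \<longlonglongrightarrow> P"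
    using tendsto_add[OF _ tendsto_const[of P]] by fastforce
  moreover have "\<forall>\<^sub>F T in sequentially. (\<Sum>t<T. a t - P) / real T + P = (1 / real T) * (\<Sum>t<T. a t)"
    using eventually_gt_at_top[of 0] by eventually_elim (simp add: sum_subtractf field_simps)
  ultimately show ?thesis
    unfolding P_def[symmetric] by (rule Lim_transform_eventually)
qed

lemma periodic_eq_lower_bound:
  fixes c :: "nat \<Rightarrow> real"
  assumes periodic: "\<And>t. c (t + T0) = c t" and "T0 > 0"
    and lower: "\<And>t. m \<le> c t" and mean: "(\<Sum>t<T0. c t) \<le> real T0 * m"
  shows "c t = m"
proof -
  have "real T0 * m \<le> (\<Sum>t<T0. c t)"
    using sum_mono[of "{..<T0}" "\<lambda>_. m" c] lower by simp
  then have "(\<Sum>t<T0. c t - m) = 0"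
    using mean by (simp add: sum_subtractf)
  then have "c s = m" if "s < T0" for s
    using lower that by (subst (asm) sum_nonneg_eq_0_iff) auto
  then show ?thesis
    using periodic_mod[of c T0, OF periodic, of t] \<open>T0 > 0\<close> by simp
qed

lemma usc_on_closed_graph:
  fixes U :: "'a::metric_space \<Rightarrow> 'b::metric_space set"
  assumes usc: "usc_on Y U" and closed: "closed (U a)" and a: "a \<in> Y"
    and z: "z \<longlonglongrightarrow> a" and v: "v \<longlonglongrightarrow> b" and zY: "\<And>j. z j \<in> Y" and vU: "\<And>j. v j \<in> U (z j)"
  shows "b \<in> U a"
proof (rule ccontr)
  assume "b \<notin> U a"
  then obtain e where "e > 0" and e: "cball b e \<subseteq> - U a"
    using closed open_contains_cball[of "- U a"] by auto
  have "open (- cball b e)" "U a \<subseteq> - cball b e"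
    using e by auto
  then obtain d where "d > 0" and d: "\<And>y'. y' \<in> Y \<Longrightarrow> dist y' a < d \<Longrightarrow> U y' \<subseteq> - cball b e"
    using usc a unfolding usc_on_def by meson
  have "\<forall>\<^sub>F j in sequentially. dist (z j) a < d" "\<forall>\<^sub>F j in sequentially. dist (v j) b < e"
    using tendstoD[OF z \<open>d > 0\<close>] tendstoD[OF v \<open>e > 0\<close>] by auto
  then have "\<forall>\<^sub>F j in sequentially. False"
  proof eventually_elim
    case (elim j)
    then have "v j \<notin> cball b e" using d[OF zY] vU by blast
    with elim show False by (simp add: dist_commute)
  qed
  then show False by simp
qed

lemma continuous_on_Times_tendsto:
  assumes "continuous_on (UNIV \<times> K) (\<lambda>(x, v). g x v)"
    and "z \<longlonglongrightarrow> a" "v \<longlonglongrightarrow> b" "\<And>j. v j \<in> K" "b \<in> K"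
  shows "(\<lambda>j. g (z j) (v j)) \<longlonglongrightarrow> g a b"
  using continuous_on_tendsto_compose[OF assms(1) tendsto_Pair[OF assms(2,3)]] assms(4,5) by simp

lemma limits_eq_if_dist_le:
  assumes "x \<longlonglongrightarrow> a" "y \<longlonglongrightarrow> b" "r \<longlonglongrightarrow> 0" "\<And>j. dist (x j) (y j) \<le> r j"
  shows "a = b"
proof -
  have "dist a b \<le> 0"
    using LIMSEQ_le[OF tendsto_dist[OF assms(1,2)] assms(3)] assms(4) by blast
  then show ?thesis by simp
qed

lemma compact_convergent_subseq_finite_family:
  fixes p :: "nat \<Rightarrow> nat \<Rightarrow> 'c::metric_space"
  assumes "compact K" and "\<And>j t. t < N \<Longrightarrow> p j t \<in> K"
  shows "\<exists>\<sigma> q. strict_mono \<sigma> \<and> (\<forall>t<N. (\<lambda>j. p (\<sigma> j) t) \<longlonglongrightarrow> q t)"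
  using assms(2)
proof (induction N)
  case 0
  show ?case using strict_mono_id by blast
next
  case (Suc N)
  then obtain \<sigma> q where \<sigma>: "strict_mono \<sigma>" and q: "\<forall>t<N. (\<lambda>j. p (\<sigma> j) t) \<longlonglongrightarrow> q t"
    by force
  obtain l \<rho> where \<rho>: "strict_mono \<rho>" and l: "((\<lambda>j. p (\<sigma> j) N) \<circ> \<rho>) \<longlonglongrightarrow> l"
    using compact_imp_seq_compact[OF \<open>compact K\<close>] Suc.prems unfolding seq_compact_def by force
  have lim: "(\<lambda>j. p ((\<sigma> \<circ> \<rho>) j) t) \<longlonglongrightarrow> (q(N := l)) t" if "t < Suc N" for t
  proof (cases "t = N")
    case False
    then show ?thesis
      using LIMSEQ_subseq_LIMSEQ[OF q[rule_format] \<rho>, of t] that by (simp add: o_def)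
  qed (use l in \<open>simp add: o_def\<close>)
  show ?case
    using strict_mono_o[OF \<sigma> \<rho>] lim by (intro exI[of _ "\<sigma> \<circ> \<rho>"] exI[of _ "q(N := l)"]) (simp add: o_def)
qed

definition lipschitz_envelope :: "'a::metric_space set \<Rightarrow> real \<Rightarrow> ('a \<Rightarrow> real) \<Rightarrow> 'a \<Rightarrow> real" where
  "lipschitz_envelope S L \<phi> y = Inf ((\<lambda>z. \<phi> z + L * dist y z) ` S)"

context
  fixes S :: "'a::metric_space set" and L lo :: real and \<phi> :: "'a \<Rightarrow> real"
  assumes S: "S \<noteq> {}" and L: "L \<ge> 0" and lo: "\<forall>z\<in>S. lo \<le> \<phi> z"
begin

lemma lipschitz_envelope_le: "z \<in> S \<Longrightarrow> lipschitz_envelope S L \<phi> y \<le> \<phi> z + L * dist y z"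
  unfolding lipschitz_envelope_def
  by (rule cInf_lower) (auto intro!: bdd_belowI[of _ lo] add_increasing2 mult_nonneg_nonneg lo[rule_format] L)

lemma lipschitz_envelope_le_self: "y \<in> S \<Longrightarrow> lipschitz_envelope S L \<phi> y \<le> \<phi> y"
  using lipschitz_envelope_le[of y y] by simp

lemma lipschitz_envelope_ge: "lo \<le> lipschitz_envelope S L \<phi> y"
  unfolding lipschitz_envelope_def
  by (rule cInf_greatest) (auto intro!: add_increasing2 mult_nonneg_nonneg lo[rule_format] L S)

lemma lipschitz_envelope_lipschitz: "L-lipschitz_on UNIV (lipschitz_envelope S L \<phi>)"
proof (rule lipschitz_onI)
  have "lipschitz_envelope S L \<phi> y \<le> lipschitz_envelope S L \<phi> y' + L * dist y y'" for y y'
  proof -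
    have "lipschitz_envelope S L \<phi> y - L * dist y y' \<le> \<phi> z + L * dist y' z" if "z \<in> S" for z
      using lipschitz_envelope_le[OF that, of y] dist_triangle[of y z y'] L
      by (smt (verit, ccfv_SIG) mult_left_mono distrib_left)
    then have "lipschitz_envelope S L \<phi> y - L * dist y y' \<le> lipschitz_envelope S L \<phi> y'"
      unfolding lipschitz_envelope_def[of S L \<phi> y'] by (intro cInf_greatest) (auto simp: S)
    then show ?thesis by simp
  qed
  then show "dist (lipschitz_envelope S L \<phi> y) (lipschitz_envelope S L \<phi> y') \<le> L * dist y y'" for y y'
    by (smt (verit) dist_commute dist_real_def)
qed (use L in simp)

end

lemma traj_add: "traj f y v (s + n) = traj f (traj f y v n) (\<lambda>s. v (s + n)) s"
  by (induction s) auto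

lemma traj_Suc_shift: "traj f y v (Suc t) = traj f (f y (v 0)) (\<lambda>s. v (Suc s)) t"
  using traj_add[of f y v t 1] by simp

lemma traj_cong: "(\<And>s. s < t \<Longrightarrow> v s = w s) \<Longrightarrow> traj f y v t = traj f y w t"
  by (induction t) auto

text \<open>The guard \<open>n i = 0\<close> only serves termination; all uses have positive lengths.\<close>

function concat_controls :: "(nat \<Rightarrow> nat) \<Rightarrow> (nat \<Rightarrow> nat \<Rightarrow> 'b) \<Rightarrow> nat \<Rightarrow> nat \<Rightarrow> 'b" where
  "concat_controls n w i t =
     (if t < n i \<or> n i = 0 then w i t else concat_controls n w (Suc i) (t - n i))"
  by auto
termination by (relation "Wellfounded.measure (\<lambda>(n, w, i, t). t)") auto

declare concat_controls.simps [simp del]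

lemma concat_controls_block: "s < n i \<Longrightarrow> concat_controls n w i s = w i s"
  by (simp add: concat_controls.simps)

lemma concat_controls_shift:
  "n i > 0 \<Longrightarrow> concat_controls n w i (s + n i) = concat_controls n w (Suc i) s"
  by (simp add: concat_controls.simps)

lemma concat_controls_shift_sum:
  assumes n_pos: "\<And>i. 0 < n i"
  shows "concat_controls n w 0 (s + (\<Sum>j<I. n j)) = concat_controls n w I s"
proof (induction I arbitrary: s)
  case (Suc I)
  have "s + (\<Sum>j<Suc I. n j) = (s + n I) + (\<Sum>j<I. n j)" by simp
  then show ?case by (simp only: Suc concat_controls_shift[where n=n, OF n_pos])
qed simp

context
  fixes n :: "nat \<Rightarrow> nat" and w :: "nat \<Rightarrow> nat \<Rightarrow> 'b" and f :: "'a \<Rightarrow> 'b \<Rightarrow> 'a" and zs :: "nat \<Rightarrow> 'a"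
  assumes n_pos: "\<And>i. 0 < n i" and zs_Suc: "\<And>i. zs (Suc i) = traj f (zs i) (w i) (n i)"
begin

lemma traj_concat_controls_block:
  "s \<le> n i \<Longrightarrow> traj f (zs i) (concat_controls n w i) s = traj f (zs i) (w i) s"
  by (rule traj_cong) (simp add: concat_controls_block)

lemma traj_concat_controls_shift:
  "traj f (zs i) (concat_controls n w i) (s + n i) = traj f (zs (Suc i)) (concat_controls n w (Suc i)) s"
  unfolding traj_add by (simp add: traj_concat_controls_block zs_Suc concat_controls_shift n_pos)

lemma traj_concat_controls_sum: "traj f (zs 0) (concat_controls n w 0) (\<Sum>j<I. n j) = zs I"
proof (induction I)
  case (Suc I)
  have "traj f (zs 0) (concat_controls n w 0) (n I + (\<Sum>j<I. n j))
      = traj f (zs I) (concat_controls n w I) (n I)"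
    unfolding traj_add Suc concat_controls_shift_sum[OF n_pos] ..
  also have "\<dots> = zs (Suc I)"
    by (simp add: traj_concat_controls_block zs_Suc)
  finally show ?case by (simp add: add.commute)
qed simp

lemma concat_controls_Uinf:
  assumes "\<And>i. w i \<in> UT Y U f (zs i) (n i)"
  shows "concat_controls n w i \<in> Uinf Y U f (zs i)"
proof -
  have "concat_controls n w i t \<in> Aset Y U f (traj f (zs i) (concat_controls n w i) t)" for t
  proof (induction t arbitrary: i rule: less_induct)
    case (less t)
    show ?case
    proof (cases "t < n i")
      case True
      then show ?thesis
        using assms[of i] by (simp add: UT_def concat_controls_block traj_concat_controls_block)
    next
      case False
      then obtain s where t: "t = s + n i" by (metis add.commute le_iff_add not_less)
      then have "s < t" using n_pos[of i] by simp
      then show ?thesis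
        using less.IH[of s "Suc i"]
        by (simp add: t concat_controls_shift[where n=n, OF n_pos] traj_concat_controls_shift)
    qed
  qed
  then show ?thesis by (simp add: Uinf_def)
qed

end

section \<open>The control system and its finite-horizon values\<close>

locale average_cost_problem =
  fixes Y :: "'a::metric_space set" and U0 :: "'b::metric_space set"
    and U :: "'a \<Rightarrow> 'b set" and f :: "'a \<Rightarrow> 'b \<Rightarrow> 'a" and k :: "'a \<Rightarrow> 'b \<Rightarrow> real"
    and V :: "'a \<Rightarrow> real"
  assumes compact_Y: "compact Y" and Y_nonempty: "Y \<noteq> {}"
    and compact_U0: "compact U0"
    and U_subset: "\<forall>x\<in>Y. U x \<subseteq> U0"
    and compact_U: "\<forall>x\<in>Y. compact (U x)"
    and usc_U: "usc_on Y U"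
    and continuous_f: "continuous_on (UNIV \<times> U0) (\<lambda>(x, v). f x v)"
    and continuous_k: "continuous_on (UNIV \<times> U0) (\<lambda>(x, v). k x v)"
    and A_nonempty: "\<forall>x\<in>Y. Aset Y U f x \<noteq> {}"
    and VT_tendsto_V: "\<forall>x\<in>Y. (\<lambda>T. VT Y U f k x T) \<longlonglongrightarrow> V x"
    and continuous_V: "continuous_on Y V"
begin

abbreviation A where "A \<equiv> Aset Y U f"

lemma A_iff: "u \<in> A y \<longleftrightarrow> u \<in> U y \<and> f y u \<in> Y"
  by (simp add: Aset_def)

lemma A_subset_U0: "y \<in> Y \<Longrightarrow> u \<in> A y \<Longrightarrow> u \<in> U0"
  using U_subset by (auto simp: A_iff)

lemma admissible_limit:
  assumes z: "z \<longlonglongrightarrow> a" and v: "v \<longlonglongrightarrow> b" and adm: "\<And>j. z j \<in> Y \<and> v j \<in> A (z j)"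
  shows "a \<in> Y" and "b \<in> A a"
proof -
  show a: "a \<in> Y"
    using closed_sequentially[OF compact_imp_closed[OF compact_Y] _ z] adm by blast
  have "b \<in> U0"
    using closed_sequentially[OF compact_imp_closed[OF compact_U0] _ v] adm A_subset_U0 by blast
  have "b \<in> U a"
    by (rule usc_on_closed_graph[OF usc_U _ a z v])
       (use adm compact_U a compact_imp_closed in \<open>auto simp: A_iff\<close>)
  have "(\<lambda>j. f (z j) (v j)) \<longlonglongrightarrow> f a b"
    using continuous_on_Times_tendsto[OF continuous_f z v] adm A_subset_U0 \<open>b \<in> U0\<close> by blast
  then have "f a b \<in> Y"
    using adm closed_sequentially[OF compact_imp_closed[OF compact_Y], of "\<lambda>j. f (z j) (v j)"]
    by (simp add: A_iff)
  with \<open>b \<in> U a\<close> show "b \<in> A a" by (simp add: A_iff)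
qed

definition kmax :: real where
  "kmax = (SOME C. \<forall>y\<in>Y. \<forall>u\<in>U0. \<bar>k y u\<bar> \<le> C)"

lemma abs_k_le_kmax:
  assumes "y \<in> Y" "u \<in> U0" shows "\<bar>k y u\<bar> \<le> kmax"
proof -
  have "bounded ((\<lambda>(x, v). k x v) ` (Y \<times> U0))"
    by (intro compact_imp_bounded compact_continuous_image continuous_on_subset[OF continuous_k]
        compact_Times compact_Y compact_U0) auto
  then obtain C where C: "\<And>c. c \<in> (\<lambda>(x, v). k x v) ` (Y \<times> U0) \<Longrightarrow> norm c \<le> C"
    unfolding bounded_iff by blast
  have "\<forall>y\<in>Y. \<forall>u\<in>U0. \<bar>k y u\<bar> \<le> C"
  proof (intro ballI)
    fix y u assume "y \<in> Y" "u \<in> U0"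
    then show "\<bar>k y u\<bar> \<le> C" using C[of "k y u"] by force
  qed
  then have "\<forall>y\<in>Y. \<forall>u\<in>U0. \<bar>k y u\<bar> \<le> kmax"
    unfolding kmax_def by (rule someI)
  then show ?thesis using assms by blast
qed

lemma kmax_nonneg: "0 \<le> kmax"
proof -
  obtain y u where "y \<in> Y" "u \<in> A y" using Y_nonempty A_nonempty by blast
  then show ?thesis using abs_k_le_kmax[of y u] A_subset_U0 by fastforce
qed

lemma traj_in_Y: "y \<in> Y \<Longrightarrow> v \<in> UT Y U f y N \<Longrightarrow> t \<le> N \<Longrightarrow> traj f y v t \<in> Y"
  by (induction t) (auto simp: UT_def A_iff)

lemma UT_admissible:
  "y \<in> Y \<Longrightarrow> v \<in> UT Y U f y N \<Longrightarrow> t < N \<Longrightarrow> traj f y v t \<in> Y \<and> v t \<in> A (traj f y v t)"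
  using traj_in_Y by (auto simp: UT_def)

lemma UT_mono: "v \<in> UT Y U f y N \<Longrightarrow> M \<le> N \<Longrightarrow> v \<in> UT Y U f y M"
  by (auto simp: UT_def)

lemma UT_shift:
  "v \<in> UT Y U f y N \<Longrightarrow> n \<le> N \<Longrightarrow> (\<lambda>s. v (s + n)) \<in> UT Y U f (traj f y v n) (N - n)"
  by (auto simp: UT_def simp flip: traj_add)

lemma Uinf_nonempty:
  assumes "y \<in> Y" shows "Uinf Y U f y \<noteq> {}"
proof -
  define s where "s = rec_nat y (\<lambda>_ x. f x (SOME u. u \<in> A x))"
  define v where "v t = (SOME u. u \<in> A (s t))" for t
  have "s t \<in> Y \<and> v t \<in> A (s t)" for t
  proof (induction t)
    case 0
    then show ?case using assms A_nonempty by (simp add: s_def v_def some_in_eq)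
  next
    case (Suc t)
    then have "s (Suc t) \<in> Y" by (simp add: s_def v_def A_iff)
    then show ?case using A_nonempty by (simp add: v_def some_in_eq)
  qed
  moreover have "traj f y v t = s t" for t
    by (induction t) (simp_all add: s_def v_def)
  ultimately have "v \<in> Uinf Y U f y"
    unfolding Uinf_def by simp
  then show ?thesis by blast
qed

lemma Uinf_subset_UT: "Uinf Y U f y \<subseteq> UT Y U f y N"
  by (auto simp: Uinf_def UT_def)

definition path_cost :: "nat \<Rightarrow> (nat \<Rightarrow> 'a) \<Rightarrow> (nat \<Rightarrow> 'b) \<Rightarrow> real" where
  "path_cost N z v = (\<Sum>t<N. k (z t) (v t))"

lemma abs_path_cost_le:
  assumes "\<And>t. t < N \<Longrightarrow> z t \<in> Y \<and> v t \<in> A (z t)"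
  shows "\<bar>path_cost N z v\<bar> \<le> real N * kmax"
proof -
  have "\<bar>path_cost N z v\<bar> \<le> (\<Sum>t<N. \<bar>k (z t) (v t)\<bar>)"
    unfolding path_cost_def by (rule sum_abs)
  also have "\<dots> \<le> (\<Sum>t<N. kmax)"
  proof (rule sum_mono)
    fix t assume "t \<in> {..<N}"
    then show "\<bar>k (z t) (v t)\<bar> \<le> kmax"
      using assms[of t] abs_k_le_kmax A_subset_U0 by blast
  qed
  finally show ?thesis by simp
qed

lemma abs_path_cost_traj_le:
  "y \<in> Y \<Longrightarrow> v \<in> UT Y U f y N \<Longrightarrow> \<bar>path_cost N (traj f y v) v\<bar> \<le> real N * kmax"
  using UT_admissible by (intro abs_path_cost_le) blast

lemma path_cost_add:
  "path_cost (n + m) (traj f y v) v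
     = path_cost n (traj f y v) v + path_cost m (traj f (traj f y v n) (\<lambda>s. v (s + n))) (\<lambda>s. v (s + n))"
  unfolding path_cost_def sum_lessThan_add by (simp add: add.commute flip: traj_add)

lemma path_cost_Cons: "path_cost (Suc T) (case_nat z z') (case_nat u v') = k z u + path_cost T z' v'"
  unfolding path_cost_def sum.lessThan_Suc_shift by simp

lemma VT_le_path_cost:
  assumes y: "y \<in> Y" and v: "v \<in> UT Y U f y T"
  shows "real T * VT Y U f k y T \<le> path_cost T (traj f y v) v"
proof (cases "T = 0")
  case False
  let ?S = "(\<lambda>w. path_cost T (traj f y w) w) ` UT Y U f y T"
  have "bdd_below ?S"
  proof (rule bdd_belowI)
    fix c assume "c \<in> ?S"
    then obtain w where w: "w \<in> UT Y U f y T" and c: "c = path_cost T (traj f y w) w" by blast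
    show "- (real T * kmax) \<le> c"
      using abs_path_cost_traj_le[OF y w] unfolding c by linarith
  qed
  then have "Inf ?S \<le> path_cost T (traj f y v) v"
    using v by (intro cInf_lower) auto
  then show ?thesis
    using False by (simp add: VT_def path_cost_def)
qed (simp add: path_cost_def)

lemma exists_path_cost_lt_VT:
  assumes y: "y \<in> Y" and "e > 0"
  shows "\<exists>v\<in>UT Y U f y T. path_cost T (traj f y v) v < real T * VT Y U f k y T + e"
proof -
  let ?S = "(\<lambda>w. path_cost T (traj f y w) w) ` UT Y U f y T"
  obtain w where w: "w \<in> UT Y U f y T"
    using Uinf_nonempty[OF y] Uinf_subset_UT by blast
  show ?thesis
  proof (cases "T = 0")
    case True
    then show ?thesis using w \<open>e > 0\<close> by (auto simp: path_cost_def)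
  next
    case False
    have "Inf ?S < real T * VT Y U f k y T + e"
      using False \<open>e > 0\<close> by (simp add: VT_def path_cost_def)
    from cInf_lessD[OF _ this] w show ?thesis by blast
  qed
qed

lemma VT_Suc_le:
  assumes y: "y \<in> Y" and u: "u \<in> A y"
  shows "real (Suc T) * VT Y U f k y (Suc T) \<le> k y u + real T * VT Y U f k (f y u) T"
proof (rule field_le_epsilon)
  fix e :: real assume "e > 0"
  have fY: "f y u \<in> Y" using u by (simp add: A_iff)
  obtain v where v: "v \<in> UT Y U f (f y u) T"
    and cost_v: "path_cost T (traj f (f y u) v) v < real T * VT Y U f k (f y u) T + e"
    using exists_path_cost_lt_VT[OF fY \<open>e > 0\<close>] by blast
  define w where "w t = (case t of 0 \<Rightarrow> u | Suc s \<Rightarrow> v s)" for t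
  have traj_w: "traj f y w (Suc t) = traj f (f y u) v t" for t
    unfolding traj_Suc_shift by (simp add: w_def)
  have "w \<in> UT Y U f y (Suc T)"
    unfolding UT_def
  proof (intro CollectI allI impI)
    fix t assume "t < Suc T"
    then show "w t \<in> A (traj f y w t)"
    proof (cases t)
      case (Suc s)
      with \<open>t < Suc T\<close> v have "v s \<in> A (traj f (f y u) v s)" by (simp add: UT_def)
      with Suc show ?thesis by (simp only: traj_w) (simp add: w_def)
    qed (simp add: u w_def)
  qed
  then have "real (Suc T) * VT Y U f k y (Suc T) \<le> path_cost (Suc T) (traj f y w) w"
    by (rule VT_le_path_cost[OF y])
  also have "\<dots> = k y u + path_cost T (traj f (f y u) v) v"
    unfolding path_cost_def sum.lessThan_Suc_shift traj_w by (simp add: w_def)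
  finally show "real (Suc T) * VT Y U f k y (Suc T) \<le> k y u + real T * VT Y U f k (f y u) T + e"
    using cost_v by simp
qed

lemma V_le_V_step:
  assumes y: "y \<in> Y" and u: "u \<in> A y"
  shows "V y \<le> V (f y u)"
proof -
  have fY: "f y u \<in> Y" using u by (simp add: A_iff)
  define W where "W T = VT Y U f k (f y u) T" for T
  have lim_y: "(\<lambda>T. VT Y U f k y (Suc T)) \<longlonglongrightarrow> V y"
    using VT_tendsto_V y LIMSEQ_Suc by blast
  have "W \<longlonglongrightarrow> V (f y u)"
    using VT_tendsto_V fY unfolding W_def by blast
  then have lim_fy: "(\<lambda>T. k y u * inverse (real (Suc T)) + (real T / real (Suc T)) * W T)
      \<longlonglongrightarrow> k y u * 0 + 1 * V (f y u)"
    by (intro tendsto_intros LIMSEQ_inverse_real_of_nat LIMSEQ_n_over_Suc_n)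
  have "VT Y U f k y (Suc T) \<le> k y u * inverse (real (Suc T)) + (real T / real (Suc T)) * W T" for T
  proof -
    have "VT Y U f k y (Suc T) = (real (Suc T) * VT Y U f k y (Suc T)) / real (Suc T)"
      by simp
    also have "\<dots> \<le> (k y u + real T * W T) / real (Suc T)"
      using VT_Suc_le[OF y u, of T] unfolding W_def by (rule divide_right_mono) simp
    also have "\<dots> = k y u * inverse (real (Suc T)) + (real T / real (Suc T)) * W T"
      by (simp add: divide_inverse algebra_simps)
    finally show ?thesis .
  qed
  then have "V y \<le> k y u * 0 + 1 * V (f y u)"
    by (intro LIMSEQ_le[OF lim_y lim_fy]) blast
  then show ?thesis by simp
qed

lemma V_le_V_traj:
  assumes "y \<in> Y" "v \<in> UT Y U f y N" "t \<le> N"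
  shows "V y \<le> V (traj f y v t)"
  using assms(3)
proof (induction t)
  case (Suc t)
  then show ?case
    using V_le_V_step UT_admissible[OF assms(1,2), of t] by fastforce
qed simp

lemma V_le_kmax:
  assumes y: "y \<in> Y" shows "V y \<le> kmax"
proof (rule LIMSEQ_le_const2)
  show "(\<lambda>T. VT Y U f k y T) \<longlonglongrightarrow> V y" using VT_tendsto_V y by blast
  obtain v where "v \<in> Uinf Y U f y" using Uinf_nonempty[OF y] by blast
  then have v: "v \<in> UT Y U f y T" for T using Uinf_subset_UT by blast
  have "VT Y U f k y T \<le> kmax" if "T \<ge> 1" for T
  proof -
    have "real T * VT Y U f k y T \<le> path_cost T (traj f y v) v"
      by (rule VT_le_path_cost[OF y v])
    also have "\<dots> \<le> real T * kmax"
      using abs_path_cost_traj_le[OF y v, of T] by simp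
    finally show ?thesis using that by simp
  qed
  then show "\<exists>N. \<forall>T\<ge>N. VT Y U f k y T \<le> kmax" by blast
qed

lemma path_cost_split:
  assumes z: "z \<in> Y" and v: "v \<in> UT Y U f z N" and "T \<le> N"
  obtains w v' where "w = traj f z v T" "w \<in> Y" "v' \<in> UT Y U f w (N - T)" "V z \<le> V w"
    "path_cost N (traj f z v) v = path_cost T (traj f z v) v + path_cost (N - T) (traj f w v') v'"
proof (rule that[OF refl])
  show "traj f z v T \<in> Y" by (rule traj_in_Y[OF z v \<open>T \<le> N\<close>])
  show "(\<lambda>s. v (s + T)) \<in> UT Y U f (traj f z v T) (N - T)" by (rule UT_shift[OF v \<open>T \<le> N\<close>])
  show "V z \<le> V (traj f z v T)" by (rule V_le_V_traj[OF z v \<open>T \<le> N\<close>])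
  show "path_cost N (traj f z v) v = path_cost T (traj f z v) v
      + path_cost (N - T) (traj f (traj f z v T) (\<lambda>s. v (s + T))) (\<lambda>s. v (s + T))"
    using path_cost_add[of T "N - T" z v] \<open>T \<le> N\<close> by simp
qed

section \<open>Pseudo-trajectories\<close>

definition pseudo_traj :: "real \<Rightarrow> nat \<Rightarrow> 'a \<Rightarrow> (nat \<Rightarrow> 'a) \<Rightarrow> (nat \<Rightarrow> 'b) \<Rightarrow> bool" where
  "pseudo_traj r N y z v \<longleftrightarrow>
     (0 < N \<longrightarrow> dist y (z 0) \<le> r) \<and> (\<forall>t<N. z t \<in> Y \<and> v t \<in> A (z t)) \<and>
     (\<forall>t. Suc t < N \<longrightarrow> dist (f (z t) (v t)) (z (Suc t)) \<le> r)"

lemma traj_pseudo_traj: "y \<in> Y \<Longrightarrow> v \<in> UT Y U f y N \<Longrightarrow> pseudo_traj 0 N y (traj f y v) v"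
  using UT_admissible unfolding pseudo_traj_def by simp

lemma pseudo_traj_0_eq_traj:
  assumes "pseudo_traj 0 N y z v" "t < N"
  shows "z t = traj f y v t"
proof -
  have "z 0 = y" and "\<And>s. Suc s < N \<Longrightarrow> z (Suc s) = f (z s) (v s)"
    using assms unfolding pseudo_traj_def by auto
  then show ?thesis
    using assms(2) by (induction t) auto
qed

lemma pseudo_traj_0_imp_UT:
  assumes "pseudo_traj 0 N y z v" "0 < N"
  shows "y \<in> Y" and "v \<in> UT Y U f y N" and "path_cost N (traj f y v) v = path_cost N z v"
proof -
  have z: "t < N \<Longrightarrow> z t = traj f y v t" for t
    using pseudo_traj_0_eq_traj[OF assms(1)] .
  have adm: "t < N \<Longrightarrow> z t \<in> Y \<and> v t \<in> A (z t)" for t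
    using assms(1) by (simp add: pseudo_traj_def)
  show "y \<in> Y" using z[of 0] adm[of 0] assms(2) by simp
  show "v \<in> UT Y U f y N" using z adm unfolding UT_def by simp
  show "path_cost N (traj f y v) v = path_cost N z v"
    unfolding path_cost_def using z by simp
qed

lemma pseudo_traj_Cons:
  assumes "dist y z \<le> r" "z \<in> Y" "u \<in> A z" and pseudo: "pseudo_traj r T (f z u) z' v'"
  shows "pseudo_traj r (Suc T) y (case_nat z z') (case_nat u v')"
proof -
  have "case_nat z z' t \<in> Y \<and> case_nat u v' t \<in> A (case_nat z z' t)" if "t < Suc T" for t
    using that assms pseudo by (cases t) (simp_all add: pseudo_traj_def)
  moreover have "dist (f (case_nat z z' t) (case_nat u v' t)) (case_nat z z' (Suc t)) \<le> r"
    if "Suc t < Suc T" for t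
    using that pseudo by (cases t) (simp_all add: pseudo_traj_def)
  ultimately show ?thesis
    using assms(1) unfolding pseudo_traj_def by simp
qed

lemma pseudo_trajs_convergent_subseq:
  assumes pseudo: "\<And>j. pseudo_traj (r j) N (y j) (z j) (v j)" and y: "\<And>j. y j \<in> Y"
  obtains \<sigma> :: "nat \<Rightarrow> nat" and a z' v' where "strict_mono \<sigma>" "(\<lambda>j. y (\<sigma> j)) \<longlonglongrightarrow> a"
    "\<And>t. t < N \<Longrightarrow> (\<lambda>j. z (\<sigma> j) t) \<longlonglongrightarrow> z' t" "\<And>t. t < N \<Longrightarrow> (\<lambda>j. v (\<sigma> j) t) \<longlonglongrightarrow> v' t"
proof -
  obtain a \<sigma>1 where \<sigma>1: "strict_mono \<sigma>1" and ya: "(y \<circ> \<sigma>1) \<longlonglongrightarrow> a"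
    using compact_imp_seq_compact[OF compact_Y, unfolded seq_compact_def, rule_format, of y] y by blast
  have "(z (\<sigma>1 j) t, v (\<sigma>1 j) t) \<in> Y \<times> U0" if "t < N" for j t
    using pseudo[of "\<sigma>1 j"] that A_subset_U0 unfolding pseudo_traj_def by blast
  from compact_convergent_subseq_finite_family[of "Y \<times> U0" N "\<lambda>j t. (z (\<sigma>1 j) t, v (\<sigma>1 j) t)",
      OF compact_Times[OF compact_Y compact_U0] this]
  obtain \<sigma>2 q where \<sigma>2: "strict_mono \<sigma>2"
    and q: "\<And>t. t < N \<Longrightarrow> (\<lambda>j. (z (\<sigma>1 (\<sigma>2 j)) t, v (\<sigma>1 (\<sigma>2 j)) t)) \<longlonglongrightarrow> q t"
    by blast
  show thesis
  proof (rule that[of "\<sigma>1 \<circ> \<sigma>2" a "\<lambda>t. fst (q t)" "\<lambda>t. snd (q t)"])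
    show "strict_mono (\<sigma>1 \<circ> \<sigma>2)" using \<sigma>1 \<sigma>2 by (rule strict_mono_o)
    show "(\<lambda>j. y ((\<sigma>1 \<circ> \<sigma>2) j)) \<longlonglongrightarrow> a"
      using LIMSEQ_subseq_LIMSEQ[OF ya \<sigma>2] by (simp add: o_def)
    show "(\<lambda>j. z ((\<sigma>1 \<circ> \<sigma>2) j) t) \<longlonglongrightarrow> fst (q t)" "(\<lambda>j. v ((\<sigma>1 \<circ> \<sigma>2) j) t) \<longlonglongrightarrow> snd (q t)"
      if "t < N" for t
      using tendsto_fst[OF q[OF that]] tendsto_snd[OF q[OF that]] by simp_all
  qed
qed

lemma pseudo_traj_limit:
  assumes r: "r \<longlonglongrightarrow> 0" and pseudo: "\<And>j. pseudo_traj (r j) N (y j) (z j) (v j)" and ya: "y \<longlonglongrightarrow> a"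
    and zc: "\<And>t. t < N \<Longrightarrow> (\<lambda>j. z j t) \<longlonglongrightarrow> z' t" and vc: "\<And>t. t < N \<Longrightarrow> (\<lambda>j. v j t) \<longlonglongrightarrow> v' t"
  shows "pseudo_traj 0 N a z' v'" and "(\<lambda>j. path_cost N (z j) (v j)) \<longlonglongrightarrow> path_cost N z' v'"
proof -
  have adm: "z j t \<in> Y \<and> v j t \<in> A (z j t)" if "t < N" for j t
    using pseudo that by (simp add: pseudo_traj_def)
  have adm': "z' t \<in> Y \<and> v' t \<in> A (z' t)" if "t < N" for t
    using admissible_limit[OF zc[OF that] vc[OF that]] adm[OF that] by blast
  have vU0: "v j t \<in> U0" "v' t \<in> U0" if "t < N" for j t
    using adm[OF that] adm'[OF that] A_subset_U0 by blast+
  show "pseudo_traj 0 N a z' v'"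
    unfolding pseudo_traj_def
  proof (intro conjI allI impI)
    assume "0 < N"
    have "\<And>j. dist (y j) (z j 0) \<le> r j"
      using pseudo \<open>0 < N\<close> by (simp add: pseudo_traj_def)
    then show "dist a (z' 0) \<le> 0"
      using limits_eq_if_dist_le[OF ya zc[OF \<open>0 < N\<close>] r] by simp
  next
    fix t assume "t < N" then show "z' t \<in> Y" "v' t \<in> A (z' t)" using adm' by auto
  next
    fix t assume t: "Suc t < N"
    then have "(\<lambda>j. f (z j t) (v j t)) \<longlonglongrightarrow> f (z' t) (v' t)"
      using continuous_on_Times_tendsto[OF continuous_f zc vc] vU0 by simp
    moreover have "\<And>j. dist (f (z j t) (v j t)) (z j (Suc t)) \<le> r j"
      using pseudo t by (simp add: pseudo_traj_def)
    ultimately show "dist (f (z' t) (v' t)) (z' (Suc t)) \<le> 0"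
      using limits_eq_if_dist_le[OF _ zc[OF t] r] by simp
  qed
  show "(\<lambda>j. path_cost N (z j) (v j)) \<longlonglongrightarrow> path_cost N z' v'"
    unfolding path_cost_def
    using continuous_on_Times_tendsto[OF continuous_k zc vc] vU0 by (intro tendsto_sum) simp
qed

lemma limit_of_cheap_pseudo_trajs:
  assumes r: "r \<longlonglongrightarrow> 0" and pseudo: "\<And>j. pseudo_traj (r j) N (y j) (z j) (v j)"
    and y: "\<And>j. y j \<in> Y" and "0 < N"
    and cheap: "\<And>j. path_cost N (z j) (v j) \<le> real N * (V (y j) - c)"
  obtains \<sigma> :: "nat \<Rightarrow> nat" and a w where "strict_mono \<sigma>" "(\<lambda>j. y (\<sigma> j)) \<longlonglongrightarrow> a" "a \<in> Y" "w \<in> UT Y U f a N"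
    "path_cost N (traj f a w) w \<le> real N * (V a - c)"
proof -
  obtain \<sigma> a z' v' where \<sigma>: "strict_mono \<sigma>" and ya: "(\<lambda>j. y (\<sigma> j)) \<longlonglongrightarrow> a"
    and zc: "\<And>t. t < N \<Longrightarrow> (\<lambda>j. z (\<sigma> j) t) \<longlonglongrightarrow> z' t" and vc: "\<And>t. t < N \<Longrightarrow> (\<lambda>j. v (\<sigma> j) t) \<longlonglongrightarrow> v' t"
    by (rule pseudo_trajs_convergent_subseq[of r N y z v, OF pseudo y]) blast
  have "(\<lambda>j. r (\<sigma> j)) \<longlonglongrightarrow> 0"
    using LIMSEQ_subseq_LIMSEQ[OF r \<sigma>] by (simp add: o_def)
  note limit = pseudo_traj_limit[OF this pseudo ya zc vc]
  note a = pseudo_traj_0_imp_UT[OF limit(1) \<open>0 < N\<close>]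
  have "(\<lambda>j. real N * (V (y (\<sigma> j)) - c)) \<longlonglongrightarrow> real N * (V a - c)"
    using continuous_on_tendsto_compose[OF continuous_V ya a(1)] y by (intro tendsto_intros) simp
  then have "path_cost N z' v' \<le> real N * (V a - c)"
    using LIMSEQ_le[OF limit(2)] cheap by blast
  then show thesis
    using that[OF \<sigma> ya a(1,2)] a(3) by simp
qed

section \<open>A uniform lower bound for long costs\<close>

definition cost_above_value :: "real \<Rightarrow> nat \<Rightarrow> 'a \<Rightarrow> bool" where
  "cost_above_value \<epsilon> T z \<longleftrightarrow> (\<forall>v\<in>UT Y U f z T. real T * (V z - \<epsilon>) < path_cost T (traj f z v) v)"

lemma not_cost_above_value_limit:
  assumes zs: "zs \<longlonglongrightarrow> z" "\<And>j. zs j \<in> Y" and "0 < T"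
    and below: "\<And>j. \<not> cost_above_value \<epsilon> T (zs j)"
  shows "\<not> cost_above_value \<epsilon> T z"
proof
  assume above: "cost_above_value \<epsilon> T z"
  have "\<exists>v. v \<in> UT Y U f (zs j) T \<and> path_cost T (traj f (zs j) v) v \<le> real T * (V (zs j) - \<epsilon>)" for j
    using below[of j] unfolding cost_above_value_def by (simp add: not_less Bex_def)
  then obtain vs where vs: "\<And>j. vs j \<in> UT Y U f (zs j) T"
    and cheap: "\<And>j. path_cost T (traj f (zs j) (vs j)) (vs j) \<le> real T * (V (zs j) - \<epsilon>)"
    by metis
  obtain \<sigma> a w where \<sigma>: "strict_mono \<sigma>" and "(\<lambda>j. zs (\<sigma> j)) \<longlonglongrightarrow> a" and "a \<in> Y"
    and w: "w \<in> UT Y U f a T" "path_cost T (traj f a w) w \<le> real T * (V a - \<epsilon>)"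
    by (rule limit_of_cheap_pseudo_trajs[OF tendsto_const traj_pseudo_traj[OF zs(2) vs] zs(2) \<open>0 < T\<close> cheap])
  moreover have "(\<lambda>j. zs (\<sigma> j)) \<longlonglongrightarrow> z"
    using LIMSEQ_subseq_LIMSEQ[OF zs(1) \<sigma>] by (simp add: o_def)
  ultimately have "a = z" using LIMSEQ_unique by blast
  then have "real T * (V a - \<epsilon>) < path_cost T (traj f a w) w"
    using above w(1) unfolding cost_above_value_def by blast
  with w(2) show False by simp
qed

lemma exists_cost_above_value:
  assumes "\<epsilon> > 0" and z: "z \<in> Y"
  shows "\<exists>T\<ge>1. cost_above_value \<epsilon> T z"
proof -
  have "(\<lambda>T. VT Y U f k z T) \<longlonglongrightarrow> V z" using VT_tendsto_V z by blast
  from order_tendstoD(1)[OF this, of "V z - \<epsilon>"]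
  obtain M where M: "\<And>T. T \<ge> M \<Longrightarrow> V z - \<epsilon> < VT Y U f k z T"
    using \<open>\<epsilon> > 0\<close> unfolding eventually_sequentially by auto
  have "cost_above_value \<epsilon> (Suc M) z"
    unfolding cost_above_value_def
  proof
    fix v assume v: "v \<in> UT Y U f z (Suc M)"
    have "real (Suc M) * (V z - \<epsilon>) < real (Suc M) * VT Y U f k z (Suc M)"
      using M[of "Suc M"] by (intro mult_strict_left_mono) auto
    also have "\<dots> \<le> path_cost (Suc M) (traj f z v) v"
      by (rule VT_le_path_cost[OF z v])
    finally show "real (Suc M) * (V z - \<epsilon>) < path_cost (Suc M) (traj f z v) v" .
  qed
  then show ?thesis by (intro exI[of _ "Suc M"]) simp
qed

lemma cost_above_value_bounded_horizon:
  assumes "\<epsilon> > 0"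
  obtains Tmax where "\<And>z. z \<in> Y \<Longrightarrow> \<exists>T. 1 \<le> T \<and> T \<le> Tmax \<and> cost_above_value \<epsilon> T z"
proof (rule ccontr)
  assume "\<not> thesis"
  then have "\<exists>z\<in>Y. \<forall>T. 1 \<le> T \<longrightarrow> T \<le> j \<longrightarrow> \<not> cost_above_value \<epsilon> T z" for j
    using that by blast
  then obtain zs where zs: "\<And>j. zs j \<in> Y"
    and bad: "\<And>j T. 1 \<le> T \<Longrightarrow> T \<le> j \<Longrightarrow> \<not> cost_above_value \<epsilon> T (zs j)"
    by metis
  obtain a \<sigma> where "a \<in> Y" "strict_mono \<sigma>" "(zs \<circ> \<sigma>) \<longlonglongrightarrow> a"
    using compact_imp_seq_compact[OF compact_Y, unfolded seq_compact_def, rule_format, of zs] zs by blast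
  obtain T where "1 \<le> T" and above: "cost_above_value \<epsilon> T a"
    using exists_cost_above_value[OF assms \<open>a \<in> Y\<close>] by blast
  have "(\<lambda>j. zs (\<sigma> (j + T))) \<longlonglongrightarrow> a"
    using LIMSEQ_ignore_initial_segment[OF \<open>(zs \<circ> \<sigma>) \<longlonglongrightarrow> a\<close>, of T] by (simp add: o_def)
  moreover have "\<not> cost_above_value \<epsilon> T (zs (\<sigma> (j + T)))" for j
    using bad[OF \<open>1 \<le> T\<close>] seq_suble[OF \<open>strict_mono \<sigma>\<close>, of "j + T"] by simp
  ultimately have "\<not> cost_above_value \<epsilon> T a"
    using not_cost_above_value_limit zs \<open>1 \<le> T\<close> by simp
  with above show False by simp
qed

lemma path_cost_ge_V_minus_const:
  assumes "\<epsilon> > 0"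
  obtains D where "\<And>N z v. z \<in> Y \<Longrightarrow> v \<in> UT Y U f z N \<Longrightarrow>
    real N * (V z - \<epsilon>) - D \<le> path_cost N (traj f z v) v"
proof -
  obtain Tmax where Tmax: "\<And>z. z \<in> Y \<Longrightarrow> \<exists>T. 1 \<le> T \<and> T \<le> Tmax \<and> cost_above_value \<epsilon> T z"
    using cost_above_value_bounded_horizon[OF assms] by blast
  define D where "D = 2 * real Tmax * kmax"
  have "real N * (V z - \<epsilon>) - D \<le> path_cost N (traj f z v) v"
    if "z \<in> Y" "v \<in> UT Y U f z N" for N z v
    using that
  proof (induction N arbitrary: z v rule: less_induct)
    case (less N)
    obtain T where T: "1 \<le> T" "T \<le> Tmax" and above: "cost_above_value \<epsilon> T z"
      using Tmax less.prems(1) by blast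
    show ?case
    proof (cases "N < T")
      case True
      have "real N * (V z - \<epsilon>) \<le> real N * kmax"
        using V_le_kmax[OF less.prems(1)] \<open>\<epsilon> > 0\<close> by (intro mult_left_mono) auto
      moreover have "- (real N * kmax) \<le> path_cost N (traj f z v) v"
        using abs_path_cost_traj_le[OF less.prems] by linarith
      moreover have "2 * real N * kmax \<le> D"
        unfolding D_def using True T(2) kmax_nonneg by (intro mult_right_mono) auto
      ultimately show ?thesis by linarith
    next
      case False
      then have "T \<le> N" by simp
      then obtain w v' where "w = traj f z v T" and w: "w \<in> Y" "v' \<in> UT Y U f w (N - T)" "V z \<le> V w"
        and split: "path_cost N (traj f z v) v = path_cost T (traj f z v) v + path_cost (N - T) (traj f w v') v'"
        by (rule path_cost_split[OF less.prems])
      have "real T * (V z - \<epsilon>) < path_cost T (traj f z v) v"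
        using above UT_mono[OF less.prems(2)] False unfolding cost_above_value_def by simp
      moreover have "real (N - T) * (V w - \<epsilon>) - D \<le> path_cost (N - T) (traj f w v') v'"
        using less.IH[OF _ w(1,2)] T(1) False by simp
      moreover have "real (N - T) * (V z - \<epsilon>) \<le> real (N - T) * (V w - \<epsilon>)"
        using w(3) by (intro mult_left_mono) simp_all
      moreover have "real N * (V z - \<epsilon>) = real T * (V z - \<epsilon>) + real (N - T) * (V z - \<epsilon>)"
        using False by (simp add: algebra_simps)
      ultimately show ?thesis using split by linarith
    qed
  qed
  then show thesis by (rule that)
qed

lemma path_cost_ge_V_eventually:
  assumes "\<epsilon> > 0"
  obtains N0 where "\<And>N z v. N0 \<le> N \<Longrightarrow> z \<in> Y \<Longrightarrow> v \<in> UT Y U f z N \<Longrightarrow>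
    real N * (V z - \<epsilon>) \<le> path_cost N (traj f z v) v"
proof -
  obtain D where D: "\<And>N z v. z \<in> Y \<Longrightarrow> v \<in> UT Y U f z N \<Longrightarrow>
      real N * (V z - \<epsilon> / 2) - D \<le> path_cost N (traj f z v) v"
    using path_cost_ge_V_minus_const[of "\<epsilon> / 2"] assms by auto
  show thesis
  proof (rule that[of "nat \<lceil>2 * D / \<epsilon>\<rceil>"])
    fix N z v assume N: "nat \<lceil>2 * D / \<epsilon>\<rceil> \<le> N" and "z \<in> Y" "v \<in> UT Y U f z N"
    have "2 * D / \<epsilon> \<le> real N"
      using N by linarith
    then have "D \<le> real N * (\<epsilon> / 2)"
      using assms by (simp add: field_simps)
    then show "real N * (V z - \<epsilon>) \<le> path_cost N (traj f z v) v"
      using D[OF \<open>z \<in> Y\<close> \<open>v \<in> UT Y U f z N\<close>] by (simp add: algebra_simps)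
  qed
qed

lemma pseudo_path_cost_ge_V:
  assumes "\<epsilon> > 0" and "0 < N"
    and exact: "\<And>z v. z \<in> Y \<Longrightarrow> v \<in> UT Y U f z N \<Longrightarrow> real N * (V z - \<epsilon>) \<le> path_cost N (traj f z v) v"
  obtains r where "r > 0"
    and "\<And>y z v. y \<in> Y \<Longrightarrow> pseudo_traj r N y z v \<Longrightarrow> real N * (V y - 2 * \<epsilon>) \<le> path_cost N z v"
proof (rule ccontr)
  assume "\<not> thesis"
  then have "\<exists>y z v. y \<in> Y \<and> pseudo_traj (inverse (real (Suc j))) N y z v
      \<and> path_cost N z v \<le> real N * (V y - 2 * \<epsilon>)" for j
    using that[of "inverse (real (Suc j))"] by (force simp: not_le)
  then obtain ys zs vs where ys: "\<And>j. ys j \<in> Y"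
    and pseudo: "\<And>j. pseudo_traj (inverse (real (Suc j))) N (ys j) (zs j) (vs j)"
    and cheap: "\<And>j. path_cost N (zs j) (vs j) \<le> real N * (V (ys j) - 2 * \<epsilon>)"
    by metis
  obtain \<sigma> a w where "strict_mono \<sigma>" "(\<lambda>j. ys (\<sigma> j)) \<longlonglongrightarrow> a" "a \<in> Y" "w \<in> UT Y U f a N"
    and "path_cost N (traj f a w) w \<le> real N * (V a - 2 * \<epsilon>)"
    by (rule limit_of_cheap_pseudo_trajs[OF LIMSEQ_inverse_real_of_nat pseudo ys \<open>0 < N\<close> cheap])
  moreover have "real N * \<epsilon> > 0" using assms by simp
  ultimately show False
    using exact[of a w] by (simp add: algebra_simps)
qed

section \<open>A lower bound for the dual value\<close>

definition bellman :: "('a \<Rightarrow> real) \<Rightarrow> 'a \<Rightarrow> real" where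
  "bellman g y = Inf ((\<lambda>u. k y u + g (f y u)) ` A y)"

context
  fixes g :: "'a \<Rightarrow> real" and B :: real and y :: 'a
  assumes g: "\<And>x. x \<in> Y \<Longrightarrow> \<bar>g x\<bar> \<le> B" and y: "y \<in> Y"
begin

lemma abs_bellman_summand_le:
  assumes "u \<in> A y" shows "\<bar>k y u + g (f y u)\<bar> \<le> kmax + B"
proof -
  have "\<bar>k y u\<bar> \<le> kmax" using abs_k_le_kmax[OF y A_subset_U0[OF y assms]] .
  moreover have "\<bar>g (f y u)\<bar> \<le> B" using g assms by (simp add: A_iff)
  ultimately show ?thesis by linarith
qed

lemma bellman_le: "u \<in> A y \<Longrightarrow> bellman g y \<le> k y u + g (f y u)"
  unfolding bellman_def
  by (rule cInf_lower) (auto intro!: bdd_belowI[of _ "- (kmax + B)"] dest: abs_bellman_summand_le)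

lemma abs_bellman_le: "\<bar>bellman g y\<bar> \<le> kmax + B"
proof -
  obtain u where u: "u \<in> A y" using A_nonempty y by blast
  have "- (kmax + B) \<le> bellman g y"
    unfolding bellman_def using u
    by (intro cInf_greatest) (auto dest: abs_bellman_summand_le)
  moreover have "bellman g y \<le> kmax + B"
    using bellman_le[OF u] abs_bellman_summand_le[OF u] by simp
  ultimately show ?thesis by simp
qed

end

text \<open>The finite-horizon values need not be continuous, since \<open>A\<close> is only upper semicontinuous.
  Value iteration is therefore regularised by a Lipschitz envelope after each step. Since
  \<open>reg_lipschitz r T * r\<close> exceeds the oscillation of \<open>bellman (reg_value r T)\<close>, near-minimisers
  in the envelope lie within distance \<open>r\<close>, so the regularised values are costs of
  \<open>r\<close>-pseudo-trajectories.\<close>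

definition reg_lipschitz :: "real \<Rightarrow> nat \<Rightarrow> real" where
  "reg_lipschitz r T = (2 * real (Suc T) * kmax + 1) / r"

primrec reg_value :: "real \<Rightarrow> nat \<Rightarrow> 'a \<Rightarrow> real" where
  "reg_value r 0 = (\<lambda>_. 0)"
| "reg_value r (Suc T) = lipschitz_envelope Y (reg_lipschitz r T) (bellman (reg_value r T))"

context
  fixes r :: real assumes r: "r > 0"
begin

lemma reg_lipschitz_nonneg: "0 \<le> reg_lipschitz r T"
  unfolding reg_lipschitz_def using r kmax_nonneg by simp

lemma abs_reg_value_le: "y \<in> Y \<Longrightarrow> \<bar>reg_value r T y\<bar> \<le> real T * kmax"
proof (induction T arbitrary: y)
  case (Suc T)
  define \<phi> where "\<phi> = bellman (reg_value r T)"
  have lo: "\<forall>z\<in>Y. - (kmax + real T * kmax) \<le> \<phi> z"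
  proof
    fix z assume "z \<in> Y"
    from abs_bellman_le[of "reg_value r T" "real T * kmax" z, OF Suc.IH this]
    show "- (kmax + real T * kmax) \<le> \<phi> z" by (simp add: \<phi>_def)
  qed
  have "- (kmax + real T * kmax) \<le> reg_value r (Suc T) y"
    using lipschitz_envelope_ge[OF Y_nonempty reg_lipschitz_nonneg[of T] lo] by (simp add: \<phi>_def)
  moreover have "reg_value r (Suc T) y \<le> \<phi> y"
    using lipschitz_envelope_le_self[OF Y_nonempty reg_lipschitz_nonneg[of T] lo Suc.prems] by (simp add: \<phi>_def)
  moreover have "\<phi> y \<le> kmax + real T * kmax"
    using abs_bellman_le[of "reg_value r T" "real T * kmax" y, OF Suc.IH Suc.prems] by (simp add: \<phi>_def)
  ultimately show ?case by (simp add: algebra_simps abs_le_iff)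
qed simp

lemma bellman_reg_value_ge: "\<forall>z\<in>Y. - (kmax + real T * kmax) \<le> bellman (reg_value r T) z"
proof
  fix z assume "z \<in> Y"
  from abs_bellman_le[of "reg_value r T" "real T * kmax" z, OF abs_reg_value_le this]
  show "- (kmax + real T * kmax) \<le> bellman (reg_value r T) z" by simp
qed

lemma continuous_on_reg_value: "continuous_on Y (reg_value r T)"
proof (cases T)
  case (Suc T')
  then show ?thesis
    using lipschitz_envelope_lipschitz[OF Y_nonempty reg_lipschitz_nonneg[of T'] bellman_reg_value_ge[of T']]
    by (auto intro: lipschitz_on_continuous_on continuous_on_subset)
qed simp

lemma reg_value_Suc_le:
  assumes "y \<in> Y" "u \<in> A y"
  shows "reg_value r (Suc T) y \<le> k y u + reg_value r T (f y u)"
proof -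
  have "reg_value r (Suc T) y \<le> bellman (reg_value r T) y"
    using lipschitz_envelope_le_self[OF Y_nonempty reg_lipschitz_nonneg[of T] bellman_reg_value_ge[of T] assms(1)]
    by simp
  also have "\<dots> \<le> k y u + reg_value r T (f y u)"
    by (rule bellman_le[of "reg_value r T" "real T * kmax", OF abs_reg_value_le assms])
  finally show ?thesis .
qed

end

context
  fixes r :: real assumes r: "r > 0"
begin

lemma reg_value_near_minimiser:
  assumes "y \<in> Y" "\<delta> > 0"
  obtains z where "z \<in> Y" "dist y z \<le> r" "bellman (reg_value r T) z < reg_value r (Suc T) y + \<delta>"
proof -
  define L where "L = reg_lipschitz r T"
  have L: "0 \<le> L" "L * r = 2 * real (Suc T) * kmax + 1"
    using reg_lipschitz_nonneg[OF r] r by (simp_all add: L_def reg_lipschitz_def)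
  let ?S = "(\<lambda>z. bellman (reg_value r T) z + L * dist y z) ` Y"
  have "Inf ?S < reg_value r (Suc T) y + min \<delta> 1"
    using \<open>\<delta> > 0\<close> by (simp add: lipschitz_envelope_def L_def)
  from cInf_lessD[OF _ this] obtain z where z: "z \<in> Y"
    and close: "bellman (reg_value r T) z + L * dist y z < reg_value r (Suc T) y + min \<delta> 1"
    using Y_nonempty by blast
  have lower: "- (kmax + real T * kmax) \<le> bellman (reg_value r T) z"
    using bellman_reg_value_ge[OF r] z by blast
  have upper: "reg_value r (Suc T) y \<le> real (Suc T) * kmax"
    using abs_reg_value_le[OF r assms(1), of "Suc T"] by simp
  have "dist y z \<le> r"
  proof (rule ccontr)
    assume "\<not> dist y z \<le> r"
    then have "L * r \<le> L * dist y z" using L(1) by (intro mult_left_mono) auto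
    then show False using close lower upper L(2) by (simp add: algebra_simps)
  qed
  moreover have "bellman (reg_value r T) z < reg_value r (Suc T) y + \<delta>"
    using close L(1) by (smt (verit) zero_le_dist mult_nonneg_nonneg)
  ultimately show thesis using that z by blast
qed

lemma reg_value_pseudo_traj:
  assumes "y \<in> Y" "\<delta> > 0"
  shows "\<exists>z v. pseudo_traj r T y z v \<and> path_cost T z v \<le> reg_value r T y + \<delta>"
  using assms
proof (induction T arbitrary: y \<delta>)
  case 0
  then show ?case by (simp add: pseudo_traj_def path_cost_def)
next
  case (Suc T)
  obtain z where z: "z \<in> Y" "dist y z \<le> r"
    and near: "bellman (reg_value r T) z < reg_value r (Suc T) y + \<delta> / 2"
    using reg_value_near_minimiser[OF Suc.prems(1), of "\<delta> / 2" T] Suc.prems(2) by auto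
  have "Inf ((\<lambda>u. k z u + reg_value r T (f z u)) ` A z) < bellman (reg_value r T) z + \<delta> / 4"
    using Suc.prems(2) by (simp add: bellman_def)
  from cInf_lessD[OF _ this] obtain u where u: "u \<in> A z"
    and "k z u + reg_value r T (f z u) < bellman (reg_value r T) z + \<delta> / 4"
    using A_nonempty z(1) by blast
  moreover obtain z' v' where "pseudo_traj r T (f z u) z' v'"
    and "path_cost T z' v' \<le> reg_value r T (f z u) + \<delta> / 4"
    using Suc.IH[of "f z u" "\<delta> / 4"] u Suc.prems(2) by (auto simp: A_iff)
  ultimately show ?case
    using pseudo_traj_Cons[OF z(2,1) u] path_cost_Cons[of T z z' u v'] near
    by (intro exI[of _ "case_nat z z'"] exI[of _ "case_nat u v'"]) auto
qed

lemma reg_value_cesaro_bellman: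
  assumes "y \<in> Y" "u \<in> A y" "0 < N"
  shows "reg_value r N y / real N - k y u \<le> (\<Sum>T<N. reg_value r T (f y u) - reg_value r T y) / real N"
proof -
  have "(\<Sum>T<N. reg_value r (Suc T) y - reg_value r T y) = reg_value r N y"
    using sum_lessThan_telescope[of "\<lambda>T. reg_value r T y" N] by (simp del: reg_value.simps(2))
  then have "reg_value r N y - real N * k y u = (\<Sum>T<N. reg_value r (Suc T) y - k y u - reg_value r T y)"
    by (simp add: sum_subtractf del: reg_value.simps(2))
  also have "\<dots> \<le> (\<Sum>T<N. reg_value r T (f y u) - reg_value r T y)"
    using reg_value_Suc_le[OF r assms(1,2)] by (intro sum_mono) (simp add: algebra_simps)
  finally have "(reg_value r N y - real N * k y u) / real N
      \<le> (\<Sum>T<N. reg_value r T (f y u) - reg_value r T y) / real N"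
    by (rule divide_right_mono) simp
  then show ?thesis
    using assms(3) by (simp add: diff_divide_distrib)
qed

end

lemma exists_reg_value_ge_V:
  assumes "e > 0"
  obtains N r where "0 < N" "0 < r" "\<And>y. y \<in> Y \<Longrightarrow> V y - e \<le> reg_value r N y / real N"
proof -
  have "e / 2 > 0" using assms by simp
  obtain N0 where N0: "\<And>N z v. N0 \<le> N \<Longrightarrow> z \<in> Y \<Longrightarrow> v \<in> UT Y U f z N \<Longrightarrow>
      real N * (V z - e / 2) \<le> path_cost N (traj f z v) v"
    using path_cost_ge_V_eventually[OF \<open>e / 2 > 0\<close>] by blast
  have "0 < Suc N0" by simp
  obtain r where "r > 0" and r: "\<And>y z v. y \<in> Y \<Longrightarrow> pseudo_traj r (Suc N0) y z v \<Longrightarrow>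
      real (Suc N0) * (V y - 2 * (e / 2)) \<le> path_cost (Suc N0) z v"
    using pseudo_path_cost_ge_V[OF \<open>e / 2 > 0\<close> \<open>0 < Suc N0\<close> N0] by auto
  show thesis
  proof (rule that[OF \<open>0 < Suc N0\<close> \<open>r > 0\<close>])
    fix y assume "y \<in> Y"
    have "real (Suc N0) * (V y - e) \<le> reg_value r (Suc N0) y + \<delta>" if "\<delta> > 0" for \<delta>
      using reg_value_pseudo_traj[OF \<open>r > 0\<close> \<open>y \<in> Y\<close> that, of "Suc N0"] r \<open>y \<in> Y\<close> by force
    then have "real (Suc N0) * (V y - e) \<le> reg_value r (Suc N0) y"
      by (rule field_le_epsilon)
    then show "V y - e \<le> reg_value r (Suc N0) y / real (Suc N0)"
      by (simp add: field_simps del: of_nat_Suc)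
  qed
qed

lemma V_le_dstar:
  assumes y0: "y0 \<in> Y"
  shows "ereal (V y0) \<le> dstar Y U f k y0"
proof (rule ereal_le_epsilon2)
  fix e :: real assume "e > 0"
  obtain N r where "0 < N" "0 < r" and reg: "\<And>y. y \<in> Y \<Longrightarrow> V y - e \<le> reg_value r N y / real N"
    by (rule exists_reg_value_ge_V[OF \<open>e > 0\<close>]) blast
  define \<eta> where "\<eta> y = (\<Sum>T<N. reg_value r T y) / real N" for y
  have "continuous_on Y \<eta>"
    unfolding \<eta>_def using \<open>0 < N\<close>
    by (intro continuous_intros continuous_on_reg_value[OF \<open>r > 0\<close>]) simp
  moreover have "k y u + V y0 - V y + \<eta> (f y u) - \<eta> y - (V y0 - e) \<ge> 0 \<and> V (f y u) - V y \<ge> 0"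
    if "(y, u) \<in> Gset Y U f" for y u
  proof -
    have y: "y \<in> Y" and u: "u \<in> A y" using that by (auto simp: Gset_def)
    have "\<eta> (f y u) - \<eta> y = (\<Sum>T<N. reg_value r T (f y u) - reg_value r T y) / real N"
      unfolding \<eta>_def by (simp add: sum_subtractf diff_divide_distrib)
    then show ?thesis
      using reg_value_cesaro_bellman[OF \<open>r > 0\<close> y u \<open>0 < N\<close>] reg[OF y] V_le_V_step[OF y u] by simp
  qed
  ultimately have "ereal (V y0 - e) \<le> dstar Y U f k y0"
    unfolding dstar_def using continuous_V by (intro SUP_upper) blast
  then show "ereal (V y0) \<le> dstar Y U f k y0 + ereal e"
    by (cases "dstar Y U f k y0") (simp_all add: algebra_simps)
qed

section \<open>Near-optimal infinite controls\<close>

lemma near_optimal_block: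
  assumes "\<epsilon> > 0" and z: "z \<in> Y"
  obtains n w where "0 < n" "w \<in> UT Y U f z n"
    "path_cost n (traj f z w) w \<le> real n * (V z + \<epsilon>)" "V (traj f z w n) \<le> V z + \<epsilon>"
proof -
  define \<epsilon>' where "\<epsilon>' = \<epsilon> / 6"
  have "\<epsilon>' > 0" using assms by (simp add: \<epsilon>'_def)
  obtain N0 where N0: "\<And>N z v. N0 \<le> N \<Longrightarrow> z \<in> Y \<Longrightarrow> v \<in> UT Y U f z N \<Longrightarrow>
      real N * (V z - \<epsilon>') \<le> path_cost N (traj f z v) v"
    using path_cost_ge_V_eventually[OF \<open>\<epsilon>' > 0\<close>] by blast
  have "(\<lambda>T. VT Y U f k z T) \<longlonglongrightarrow> V z" using VT_tendsto_V z by blast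
  from order_tendstoD(2)[OF this, of "V z + \<epsilon>'"]
  obtain M where M: "\<And>T. M \<le> T \<Longrightarrow> VT Y U f k z T < V z + \<epsilon>'"
    using \<open>\<epsilon>' > 0\<close> unfolding eventually_sequentially by auto
  define m where "m = Suc (max N0 M)"
  obtain w where w: "w \<in> UT Y U f z (m + m)"
    and near: "path_cost (m + m) (traj f z w) w < real (m + m) * VT Y U f k z (m + m) + real (m + m) * \<epsilon>'"
    using exists_path_cost_lt_VT[OF z, of "real (m + m) * \<epsilon>'" "m + m"] \<open>\<epsilon>' > 0\<close> by (auto simp: m_def)
  have "M \<le> m + m" by (simp add: m_def)
  then have "real (m + m) * VT Y U f k z (m + m) \<le> real (m + m) * (V z + \<epsilon>')"
    using less_imp_le[OF M] by (intro mult_left_mono) simp_all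
  with near have total: "path_cost (m + m) (traj f z w) w < real m * (2 * V z + 4 * \<epsilon>')"
    by (simp add: algebra_simps)
  have "m \<le> m + m" by simp
  then obtain x w' where x_eq: "x = traj f z w m" and x: "x \<in> Y" "w' \<in> UT Y U f x (m + m - m)" "V z \<le> V x"
    and split: "path_cost (m + m) (traj f z w) w
      = path_cost m (traj f z w) w + path_cost (m + m - m) (traj f x w') w'"
    by (rule path_cost_split[OF z w])
  have wm: "w \<in> UT Y U f z m" using UT_mono[OF w] by simp
  txt \<open>Each half costs at least \<open>m (V - \<epsilon>')\<close> while the whole costs less than
    \<open>2 m (V z + 2 \<epsilon>')\<close>, so the first half is cheap and the value at its endpoint cannot have
    grown much.\<close>
  have w'm: "w' \<in> UT Y U f x m" using x(2) by simp
  have "real m * (V z - \<epsilon>') \<le> path_cost m (traj f z w) w"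
    and "real m * (V x - \<epsilon>') \<le> path_cost m (traj f x w') w'"
    using N0[OF _ z wm] N0[OF _ x(1) w'm] by (simp_all add: m_def)
  moreover have "real m * V z \<le> real m * V x"
    using x(3) by (intro mult_left_mono) simp_all
  ultimately have "path_cost m (traj f z w) w \<le> real m * (V z + \<epsilon>)"
    and "real m * V x \<le> real m * (V z + \<epsilon>)"
    using total split by (simp_all add: \<epsilon>'_def algebra_simps)
  moreover have "0 < m" by (simp add: m_def)
  ultimately show thesis
    using that[OF _ wm] x_eq by simp
qed

lemma near_optimal_block_sequence:
  assumes "\<delta> > 0" and y0: "y0 \<in> Y"
  obtains zs w n where "zs 0 = y0" "\<And>i. zs (Suc i) = traj f (zs i) (w i) (n i)" "\<And>i. 0 < n i"
    "\<And>i. w i \<in> UT Y U f (zs i) (n i)"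
    "\<And>i. path_cost (n i) (traj f (zs i) (w i)) (w i) \<le> real (n i) * (V y0 + \<delta>)"
proof -
  define \<epsilon> where "\<epsilon> i = \<delta> / 2 ^ Suc i" for i :: nat
  have "\<forall>i. \<forall>z\<in>Y. \<exists>n w. 0 < n \<and> w \<in> UT Y U f z n \<and> path_cost n (traj f z w) w \<le> real n * (V z + \<epsilon> i)
      \<and> V (traj f z w n) \<le> V z + \<epsilon> i"
    using near_optimal_block \<open>\<delta> > 0\<close> unfolding \<epsilon>_def by (metis zero_less_divide_iff zero_less_numeral zero_less_power)
  then obtain n w where block: "\<And>i z. z \<in> Y \<Longrightarrow> 0 < n i z \<and> w i z \<in> UT Y U f z (n i z)
      \<and> path_cost (n i z) (traj f z (w i z)) (w i z) \<le> real (n i z) * (V z + \<epsilon> i)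
      \<and> V (traj f z (w i z) (n i z)) \<le> V z + \<epsilon> i"
    by metis
  define zs where "zs = rec_nat y0 (\<lambda>i z. traj f z (w i z) (n i z))"
  have zs_Suc: "zs (Suc i) = traj f (zs i) (w i (zs i)) (n i (zs i))" for i
    by (simp add: zs_def)
  have zs: "zs i \<in> Y" for i
  proof (induction i)
    case (Suc i)
    then show ?case
      using block[OF Suc] traj_in_Y[OF Suc, of "w i (zs i)" "n i (zs i)" "n i (zs i)"] by (simp add: zs_Suc)
  qed (simp add: zs_def y0)
  txt \<open>Block \<open>i\<close> may raise the value by \<open>\<epsilon> i\<close>; these increments sum to less than \<open>\<delta>\<close>.\<close>
  have V_zs: "V (zs i) \<le> V y0 + \<delta> - \<delta> / 2 ^ i" for i
  proof (induction i)
    case (Suc i)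
    have "V (zs (Suc i)) \<le> V (zs i) + \<epsilon> i"
      using block[OF zs[of i]] by (simp add: zs_Suc)
    then have "V (zs (Suc i)) \<le> V y0 + \<delta> - \<delta> / 2 ^ i + \<delta> / 2 ^ Suc i"
      using Suc by (simp add: \<epsilon>_def)
    also have "\<dots> = V y0 + \<delta> - \<delta> / 2 ^ Suc i"
      by (simp add: field_simps)
    finally show ?case .
  qed (simp add: zs_def)
  show thesis
  proof (rule that[of zs "\<lambda>i. w i (zs i)" "\<lambda>i. n i (zs i)"])
    fix i
    have "V (zs i) + \<epsilon> i \<le> V y0 + \<delta>"
      using V_zs[of i] \<open>\<delta> > 0\<close> by (simp add: \<epsilon>_def field_simps)
    then have "real (n i (zs i)) * (V (zs i) + \<epsilon> i) \<le> real (n i (zs i)) * (V y0 + \<delta>)"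
      by (intro mult_left_mono) simp_all
    moreover have "path_cost (n i (zs i)) (traj f (zs i) (w i (zs i))) (w i (zs i))
        \<le> real (n i (zs i)) * (V (zs i) + \<epsilon> i)"
      using block[where i=i and z="zs i"] zs[of i] by blast
    ultimately show "path_cost (n i (zs i)) (traj f (zs i) (w i (zs i))) (w i (zs i))
        \<le> real (n i (zs i)) * (V y0 + \<delta>)"
      by linarith
  qed (use block zs in \<open>simp_all add: zs_Suc zs_def\<close>)
qed

context
  fixes zs :: "nat \<Rightarrow> 'a" and n :: "nat \<Rightarrow> nat" and w :: "nat \<Rightarrow> nat \<Rightarrow> 'b" and c :: real
  assumes zs_Suc: "\<And>i. zs (Suc i) = traj f (zs i) (w i) (n i)" and n_pos: "\<And>i. 0 < n i"
    and w: "\<And>i. w i \<in> UT Y U f (zs i) (n i)"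
    and block_cost: "\<And>i. path_cost (n i) (traj f (zs i) (w i)) (w i) \<le> real (n i) * c"
begin

lemma path_cost_concat_controls_le:
  "path_cost (\<Sum>j<I. n j) (traj f (zs 0) (concat_controls n w 0)) (concat_controls n w 0)
     \<le> real (\<Sum>j<I. n j) * c"
proof (induction I)
  case (Suc I)
  let ?u = "concat_controls n w 0" and ?S = "\<Sum>j<I. n j"
  have "(\<lambda>s. ?u (s + ?S)) = concat_controls n w I"
    using concat_controls_shift_sum[where n=n, OF n_pos] by (rule ext)
  moreover have "traj f (zs 0) ?u ?S = zs I"
    by (rule traj_concat_controls_sum[where n=n and zs=zs, OF n_pos zs_Suc])
  ultimately have "path_cost (?S + n I) (traj f (zs 0) ?u) ?u = path_cost ?S (traj f (zs 0) ?u) ?u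
      + path_cost (n I) (traj f (zs I) (concat_controls n w I)) (concat_controls n w I)"
    using path_cost_add[of ?S "n I" "zs 0" ?u] by simp
  also have "path_cost (n I) (traj f (zs I) (concat_controls n w I)) (concat_controls n w I)
      = path_cost (n I) (traj f (zs I) (w I)) (w I)"
    unfolding path_cost_def
    by (intro sum.cong) (simp_all add: concat_controls_block traj_concat_controls_block[where n=n and zs=zs, OF n_pos zs_Suc])
  finally show ?case
    using Suc block_cost[of I] by (simp add: algebra_simps)
qed (simp add: path_cost_def)

lemma avg_cost_concat_controls_le: "avg_cost f k (zs 0) (concat_controls n w 0) \<le> ereal c"
proof -
  let ?u = "concat_controls n w 0"
  define S where "S I = (\<Sum>j<Suc I. n j)" for I
  define X where "X T = ereal ((1 / real T) * path_cost T (traj f (zs 0) ?u) ?u)" for T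
  have "strict_mono S"
    unfolding S_def using n_pos by (intro strict_monoI_Suc) simp
  then have "avg_cost f k (zs 0) ?u \<le> liminf (X \<circ> S)"
    unfolding avg_cost_def X_def path_cost_def by (rule liminf_subseq_mono)
  also have "\<dots> \<le> ereal c"
  proof (rule Liminf_le)
    have "X (S I) \<le> ereal c" for I
    proof -
      have "0 < S I" using n_pos[of I] by (simp add: S_def)
      moreover have "path_cost (S I) (traj f (zs 0) ?u) ?u \<le> real (S I) * c"
        unfolding S_def by (rule path_cost_concat_controls_le)
      ultimately show ?thesis by (simp add: X_def pos_divide_le_eq mult.commute)
    qed
    then show "\<forall>\<^sub>F I in sequentially. (X \<circ> S) I \<le> ereal c"
      by (simp add: always_eventually)
  qed simp
  finally show ?thesis .
qed

end

lemma INF_avg_cost_le_V: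
  assumes y0: "y0 \<in> Y"
  shows "(INF u\<in>Uinf Y U f y0. avg_cost f k y0 u) \<le> ereal (V y0)"
proof (rule ereal_le_epsilon2)
  fix \<delta> :: real assume "\<delta> > 0"
  obtain zs w n where "zs 0 = y0" and zs_Suc: "\<And>i. zs (Suc i) = traj f (zs i) (w i) (n i)"
    and n_pos: "\<And>i. 0 < n i" and w: "\<And>i. w i \<in> UT Y U f (zs i) (n i)"
    and cost: "\<And>i. path_cost (n i) (traj f (zs i) (w i)) (w i) \<le> real (n i) * (V y0 + \<delta>)"
    by (rule near_optimal_block_sequence[OF \<open>\<delta> > 0\<close> y0]) blast
  have "concat_controls n w 0 \<in> Uinf Y U f y0"
    using concat_controls_Uinf[where n=n and zs=zs and i=0, OF n_pos zs_Suc w] \<open>zs 0 = y0\<close> by simp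
  moreover have "avg_cost f k y0 (concat_controls n w 0) \<le> ereal (V y0 + \<delta>)"
    using avg_cost_concat_controls_le[of zs w n, OF zs_Suc n_pos w cost] \<open>zs 0 = y0\<close> by simp
  ultimately show "(INF u\<in>Uinf Y U f y0. avg_cost f k y0 u) \<le> ereal (V y0) + ereal \<delta>"
    by (metis INF_lower order_trans plus_ereal.simps(1))
qed

section \<open>Optimal periodic processes\<close>

lemma dual_optimal_along_process:
  assumes opt: "dual_optimal Y U f k y0 \<psi> \<eta>" and y0: "y0 \<in> Y" and "y 0 = y0"
    and adm: "\<And>t. u t \<in> A (y t)" and dyn: "\<And>t. y (Suc t) = f (y t) (u t)"
  shows "V y0 - \<psi> y0 \<le> k (y t) (u t) - \<psi> (y t) + \<eta> (y (Suc t)) - \<eta> (y t)"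
    and "\<psi> (y t) \<le> \<psi> (y (Suc t))"
proof -
  have "y t \<in> Y" for t
    by (induction t) (use assms in \<open>auto simp: A_iff\<close>)
  then have "(y t, u t) \<in> Gset Y U f"
    using adm by (simp add: Gset_def)
  then have dual: "dstar Y U f k y0 \<le> ereal (k (y t) (u t) + \<psi> y0 - \<psi> (y t) + \<eta> (y (Suc t)) - \<eta> (y t))"
    and "\<psi> (y t) \<le> \<psi> (y (Suc t))"
    using opt dyn[of t] unfolding dual_optimal_def by fastforce+
  then show "\<psi> (y t) \<le> \<psi> (y (Suc t))" by simp
  have "ereal (V y0) \<le> ereal (k (y t) (u t) + \<psi> y0 - \<psi> (y t) + \<eta> (y (Suc t)) - \<eta> (y t))"
    using V_le_dstar[OF y0] dual by (rule order_trans)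
  then show "V y0 - \<psi> y0 \<le> k (y t) (u t) - \<psi> (y t) + \<eta> (y (Suc t)) - \<eta> (y t)"
    by simp
qed

lemma periodic_optimal_mean_le_V:
  assumes y0: "y0 \<in> Y" and periodic: "\<And>t. c (t + T0) = c t" and "T0 > 0"
    and opt: "liminf (\<lambda>T. ereal ((1 / real T) * (\<Sum>t<T. c t))) = (INF u\<in>Uinf Y U f y0. avg_cost f k y0 u)"
  shows "(\<Sum>t<T0. c t) \<le> real T0 * V y0"
proof -
  have "(\<lambda>T. ereal ((1 / real T) * (\<Sum>t<T. c t))) \<longlonglongrightarrow> ereal ((\<Sum>t<T0. c t) / real T0)"
    using periodic_average_tendsto[of c T0, OF periodic \<open>T0 > 0\<close>] by (rule tendsto_ereal)
  then have "ereal ((\<Sum>t<T0. c t) / real T0) \<le> ereal (V y0)"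
    using lim_imp_Liminf[of sequentially] opt INF_avg_cost_le_V[OF y0] by force
  then show ?thesis
    using \<open>T0 > 0\<close> by (simp add: divide_le_eq mult.commute)
qed

end

theorem proposition4p6:
  fixes Y :: "'a::euclidean_space set" and U0 :: "'b::metric_space set"
    and U :: "'a \<Rightarrow> 'b set" and f :: "'a \<Rightarrow> 'b \<Rightarrow> 'a" and k :: "'a \<Rightarrow> 'b \<Rightarrow> real"
    and V :: "'a \<Rightarrow> real" and y0 :: 'a and \<psi> \<eta> :: "'a \<Rightarrow> real"
    and y :: "nat \<Rightarrow> 'a" and u :: "nat \<Rightarrow> 'b"
  assumes Y: "compact Y" "Y \<noteq> {}"
    and U0: "compact U0"
    and U_sub: "\<forall>x\<in>Y. U x \<subseteq> U0"
    and U_cpt: "\<forall>x\<in>Y. compact (U x)"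
    and U_usc: "usc_on Y U"
    and f_cont: "continuous_on (UNIV \<times> U0) (\<lambda>(x, v). f x v)"
    and k_cont: "continuous_on (UNIV \<times> U0) (\<lambda>(x, v). k x v)"
    and A_ne: "\<forall>x\<in>Y. Aset Y U f x \<noteq> {}"
    and V_lim: "\<forall>x\<in>Y. (\<lambda>T. VT Y U f k x T) \<longlonglongrightarrow> V x"
    and V_cont: "continuous_on Y V"
    and y0: "y0 \<in> Y"
    and opt_dual: "dual_optimal Y U f k y0 \<psi> \<eta>"
    and y_0: "y 0 = y0"
    and adm: "\<forall>t. u t \<in> Aset Y U f (y t)"
    and dyn: "\<forall>t. y (Suc t) = f (y t) (u t)"
    and periodic: "\<exists>T0::nat. T0 > 0 \<and> (\<forall>t. y (t + T0) = y t \<and> u (t + T0) = u t)"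
    and opt: "liminf (\<lambda>T. ereal ((1 / real T) * (\<Sum>t<T. k (y t) (u t))))
              = (INF u' \<in> Uinf Y U f y0. avg_cost f k y0 u')"
  shows "\<forall>t. k (y t) (u t) - \<psi> (y t) + \<eta> (f (y t) (u t)) - \<eta> (y t) = V y0 - \<psi> y0
             \<and> \<psi> (y t) = \<psi> y0"
proof -
  interpret average_cost_problem Y U0 U f k V
    using Y U0 U_sub U_cpt U_usc f_cont k_cont A_ne V_lim V_cont by unfold_locales
  obtain T0 :: nat where "T0 > 0" and y_per: "\<And>t. y (t + T0) = y t" and u_per: "\<And>t. u (t + T0) = u t"
    using periodic by blast
  note dual = dual_optimal_along_process[OF opt_dual y0 y_0 adm[rule_format] dyn[rule_format]]
  have \<psi>_const: "\<psi> (y t) = \<psi> y0" for t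
    using periodic_mono_const[of "\<lambda>t. \<psi> (y t)" T0] dual(2) y_per \<open>T0 > 0\<close> y_0 by simp
  define c where "c t = k (y t) (u t) + (\<eta> (y (Suc t)) - \<eta> (y t))" for t
  have c_per: "c (t + T0) = c t" for t
    by (simp only: c_def add_Suc[symmetric] y_per u_per)
  have c_ge: "V y0 \<le> c t" for t
    using dual(1)[of t] \<psi>_const[of t] by (simp add: c_def)
  have "(\<Sum>t<T0. c t) = (\<Sum>t<T0. k (y t) (u t))"
    using sum_lessThan_telescope[of "\<lambda>t. \<eta> (y t)" T0] y_per[of 0] by (simp add: c_def sum.distrib)
  also have "\<dots> \<le> real T0 * V y0"
    using periodic_optimal_mean_le_V[OF y0 _ \<open>T0 > 0\<close> opt] y_per u_per by simp
  finally have c_eq: "c t = V y0" for t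
    by (rule periodic_eq_lower_bound[of c T0, OF c_per \<open>T0 > 0\<close> c_ge])
  show ?thesis
  proof (intro allI conjI)
    fix t
    show "\<psi> (y t) = \<psi> y0" by (rule \<psi>_const)
    show "k (y t) (u t) - \<psi> (y t) + \<eta> (f (y t) (u t)) - \<eta> (y t) = V y0 - \<psi> y0"
      using c_eq[of t] \<psi>_const[of t] dyn[rule_format, of t] by (simp add: c_def)
  qed
qed

end
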